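(* Let $f:E\to X$ be a fibrewise pointed map over $B$. Then $\mathrm{secat}^B_B(f)\le\mathrm{cat}^B_B(X)$. If moreover $E$ is fibrewise pointed contractible, then $\mathrm{secat}^B_B(f)=\mathrm{cat}^B_B(X)$.
   Context: Fibrewise pointed space over $B$: a space $X$ with a map $p_X:X\to B$ and a section $s_X$; fibrewise pointed map: $p_Yf=p_X$, $fs_X=s_Y$. A fibrewise pointed homotopy is a homotopy $H$ with $p_Y(H(x,t))=p_X(x)$ and $H(s_X(b),t)=s_Y(b)$ for all $b,t$ ($\simeq^B_B$). $E$ is fibrewise pointed contractible if it is fibrewise pointed homotopy equivalent to $B$ (with projection and section $\mathrm{id}_B$). $\mathrm{secat}^B_B(f)$: least $n$ such that $X$ is covered by $n+1$ open sets $U\supseteq s_X(B)$ each with a fibrewise pointed map $s:U\to E$ with $fs\simeq^B_B$ the inclusion $U\hookrightarrow X$. $\mathrm{cat}^B_B(X)$: least $n$ such that $X$ is covered by $n+1$ open sets $U_i\supseteq s_X(B)$ with inclusion $U_i\hookrightarrow X$ fibrewise pointed homotopic to $s_X\circ p_X|_{U_i}$. Both $\infty$ if no such $n$. *)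

theory Defs
  imports "HOL-Analysis.Analysis"
begin

definition fwp_space :: "'b topology \<Rightarrow> 'x topology \<Rightarrow> ('x \<Rightarrow> 'b) \<Rightarrow> ('b \<Rightarrow> 'x) \<Rightarrow> bool" where
  "fwp_space B X p s \<longleftrightarrow> continuous_map X B p \<and> continuous_map B X s \<and>
     (\<forall>b\<in>topspace B. p (s b) = b)"

definition fwp_map :: "'b topology \<Rightarrow> 'y topology \<Rightarrow> ('y \<Rightarrow> 'b) \<Rightarrow> ('b \<Rightarrow> 'y)
    \<Rightarrow> 'z topology \<Rightarrow> ('z \<Rightarrow> 'b) \<Rightarrow> ('b \<Rightarrow> 'z) \<Rightarrow> ('y \<Rightarrow> 'z) \<Rightarrow> bool" where
  "fwp_map B Y pY sY Z pZ sZ f \<longleftrightarrow> continuous_map Y Z f \<and>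
     (\<forall>y\<in>topspace Y. pZ (f y) = pY y) \<and> (\<forall>b\<in>topspace B. f (sY b) = sZ b)"

definition fwp_homotopic :: "'b topology \<Rightarrow> 'y topology \<Rightarrow> ('y \<Rightarrow> 'b) \<Rightarrow> ('b \<Rightarrow> 'y)
    \<Rightarrow> 'z topology \<Rightarrow> ('z \<Rightarrow> 'b) \<Rightarrow> ('b \<Rightarrow> 'z) \<Rightarrow> ('y \<Rightarrow> 'z) \<Rightarrow> ('y \<Rightarrow> 'z) \<Rightarrow> bool" where
  "fwp_homotopic B Y pY sY Z pZ sZ g h \<longleftrightarrow>
     (\<exists>H. continuous_map (prod_topology Y (top_of_set {0..1::real})) Z H \<and>
          (\<forall>y\<in>topspace Y. H (y, 0) = g y \<and> H (y, 1) = h y) \<and>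
          (\<forall>y\<in>topspace Y. \<forall>t\<in>{0..1}. pZ (H (y, t)) = pY y) \<and>
          (\<forall>b\<in>topspace B. \<forall>t\<in>{0..1}. H (sY b, t) = sZ b))"

definition fwp_contractible :: "'b topology \<Rightarrow> 'e topology \<Rightarrow> ('e \<Rightarrow> 'b) \<Rightarrow> ('b \<Rightarrow> 'e) \<Rightarrow> bool" where
  "fwp_contractible B E pE sE \<longleftrightarrow>
     (\<exists>g h. fwp_map B E pE sE B id id g \<and> fwp_map B B id id E pE sE h \<and>
        fwp_homotopic B B id id B id id (g \<circ> h) id \<and>
        fwp_homotopic B E pE sE E pE sE (h \<circ> g) id)"

text \<open>Fibrewise pointed sectional category of f : E \<rightarrow> X (value in enat, Inf {} = \<infinity>).
The open set U carries the subspace topology, projection pX and section sX.\<close>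

definition secatBB :: "'b topology \<Rightarrow> 'e topology \<Rightarrow> ('e \<Rightarrow> 'b) \<Rightarrow> ('b \<Rightarrow> 'e)
    \<Rightarrow> 'x topology \<Rightarrow> ('x \<Rightarrow> 'b) \<Rightarrow> ('b \<Rightarrow> 'x) \<Rightarrow> ('e \<Rightarrow> 'x) \<Rightarrow> enat" where
  "secatBB B E pE sE X pX sX f = Inf {enat n | n.
     \<exists>U :: nat \<Rightarrow> 'x set.
       topspace X \<subseteq> (\<Union>i\<le>n. U i) \<and>
       (\<forall>i\<le>n. openin X (U i) \<and> sX ` topspace B \<subseteq> U i \<and>
          (\<exists>\<sigma>. fwp_map B (subtopology X (U i)) pX sX E pE sE \<sigma> \<and>
               fwp_homotopic B (subtopology X (U i)) pX sX X pX sX (f \<circ> \<sigma>) id))}"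

definition catBB :: "'b topology \<Rightarrow> 'x topology \<Rightarrow> ('x \<Rightarrow> 'b) \<Rightarrow> ('b \<Rightarrow> 'x) \<Rightarrow> enat" where
  "catBB B X pX sX = Inf {enat n | n.
     \<exists>U :: nat \<Rightarrow> 'x set.
       topspace X \<subseteq> (\<Union>i\<le>n. U i) \<and>
       (\<forall>i\<le>n. openin X (U i) \<and> sX ` topspace B \<subseteq> U i \<and>
          fwp_homotopic B (subtopology X (U i)) pX sX X pX sX id (sX \<circ> pX))}"

end

theory Submission
  imports Defs
begin

text \<open>Both categories are infima over open covers by sets containing the section, so it
  suffices to compare the kinds of open sets allowed. If \<open>id \<simeq> sX \<circ> pX\<close> on U, then
  \<open>\<sigma> = sE \<circ> pX\<close> is a homotopy section, as \<open>f \<circ> sE \<circ> pX = sX \<circ> pX\<close>. Conversely, a fibrewise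
  pointed equivalence E \<simeq> B consists of the maps pE and sE (the fibrewise conditions
  force this), so \<open>sE \<circ> pE \<simeq> id\<close> on E, and for a homotopy section \<sigma> over U we get
  \<open>sX \<circ> pX = f \<circ> sE \<circ> pE \<circ> \<sigma> \<simeq> f \<circ> \<sigma> \<simeq> id\<close>.\<close>

definition fwp_fun :: "'b topology \<Rightarrow> 'y topology \<Rightarrow> ('y \<Rightarrow> 'b) \<Rightarrow> ('b \<Rightarrow> 'y)
    \<Rightarrow> ('z \<Rightarrow> 'b) \<Rightarrow> ('b \<Rightarrow> 'z) \<Rightarrow> ('y \<Rightarrow> 'z) \<Rightarrow> bool" where
  "fwp_fun B Y pY sY pZ sZ k \<longleftrightarrow>
     (\<forall>y\<in>topspace Y. pZ (k y) = pY y) \<and> (\<forall>b\<in>topspace B. k (sY b) = sZ b)"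

lemma continuous_map_prod_swap:
  assumes "continuous_map (prod_topology X Y) Z k"
  shows "continuous_map (prod_topology Y X) Z (\<lambda>(y, x). k (x, y))"
proof -
  have "continuous_map (prod_topology Y X) (prod_topology X Y) (\<lambda>(y, x). (x, y))"
    by (simp add: case_prod_unfold continuous_map_pairedI continuous_map_fst continuous_map_snd)
  from continuous_map_compose[OF this assms] show ?thesis
    by (simp add: o_def case_prod_unfold)
qed

text \<open>The hypothesis makes \<open>fwp_fun\<close> depend only on values on \<open>topspace Y\<close>, which is
  what \<open>homotopic_with\<close> needs to be indifferent to the junk values of the maps elsewhere.\<close>

lemma fwp_homotopic_iff_homotopic_with:
  assumes "sY ` topspace B \<subseteq> topspace Y"
  shows "fwp_homotopic B Y pY sY Z pZ sZ g h \<longleftrightarrow>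
    homotopic_with (fwp_fun B Y pY sY pZ sZ) Y Z g h"
proof
  assume "fwp_homotopic B Y pY sY Z pZ sZ g h"
  then obtain H where H: "continuous_map (prod_topology Y (top_of_set {0..1::real})) Z H"
    "\<forall>y\<in>topspace Y. H (y, 0) = g y \<and> H (y, 1) = h y"
    "\<forall>y\<in>topspace Y. \<forall>t\<in>{0..1}. pZ (H (y, t)) = pY y"
    "\<forall>b\<in>topspace B. \<forall>t\<in>{0..1}. H (sY b, t) = sZ b"
    unfolding fwp_homotopic_def by blast
  have "homotopic_with (fwp_fun B Y pY sY pZ sZ) Y Z (\<lambda>y. H (y, 0)) (\<lambda>y. H (y, 1))"
    unfolding homotopic_with_def
    using continuous_map_prod_swap[OF H(1)] H(3,4)
    by (intro exI[where x = "\<lambda>(t, y). H (y, t)"]) (auto simp: fwp_fun_def)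
  then show "homotopic_with (fwp_fun B Y pY sY pZ sZ) Y Z g h"
    by (rule homotopic_with_eq) (use H(2) assms in \<open>auto simp: fwp_fun_def image_subset_iff\<close>)
next
  assume "homotopic_with (fwp_fun B Y pY sY pZ sZ) Y Z g h"
  then obtain k where k: "continuous_map (prod_topology (top_of_set {0..1::real}) Y) Z k"
    "\<forall>y. k (0, y) = g y" "\<forall>y. k (1, y) = h y"
    "\<forall>t\<in>{0..1}. fwp_fun B Y pY sY pZ sZ (\<lambda>y. k (t, y))"
    unfolding homotopic_with_def by blast
  show "fwp_homotopic B Y pY sY Z pZ sZ g h"
    unfolding fwp_homotopic_def
    using continuous_map_prod_swap[OF k(1)] k(2-4)
    by (intro exI[where x = "\<lambda>(y, t). k (t, y)"]) (auto simp: fwp_fun_def)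
qed

lemma fwp_homotopic_sym:
  assumes "sY ` topspace B \<subseteq> topspace Y" "fwp_homotopic B Y pY sY Z pZ sZ g h"
  shows "fwp_homotopic B Y pY sY Z pZ sZ h g"
  using assms homotopic_with_sym fwp_homotopic_iff_homotopic_with by metis

lemma fwp_homotopic_trans:
  assumes "sY ` topspace B \<subseteq> topspace Y"
    "fwp_homotopic B Y pY sY Z pZ sZ f g" "fwp_homotopic B Y pY sY Z pZ sZ g h"
  shows "fwp_homotopic B Y pY sY Z pZ sZ f h"
  using assms homotopic_with_trans fwp_homotopic_iff_homotopic_with by metis

lemma fwp_homotopic_cong:
  assumes "fwp_homotopic B Y pY sY Z pZ sZ g h"
    "\<And>y. y \<in> topspace Y \<Longrightarrow> g' y = g y" "\<And>y. y \<in> topspace Y \<Longrightarrow> h' y = h y"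
  shows "fwp_homotopic B Y pY sY Z pZ sZ g' h'"
  using assms unfolding fwp_homotopic_def by auto

lemma fwp_homotopic_compose_left:
  assumes "fwp_homotopic B Y pY sY E pE sE g h" "fwp_map B E pE sE X pX sX f"
  shows "fwp_homotopic B Y pY sY X pX sX (f \<circ> g) (f \<circ> h)"
proof -
  obtain H where H: "continuous_map (prod_topology Y (top_of_set {0..1::real})) E H"
    "\<forall>y\<in>topspace Y. H (y, 0) = g y \<and> H (y, 1) = h y"
    "\<forall>y\<in>topspace Y. \<forall>t\<in>{0..1}. pE (H (y, t)) = pY y"
    "\<forall>b\<in>topspace B. \<forall>t\<in>{0..1}. H (sY b, t) = sE b"
    using assms(1) unfolding fwp_homotopic_def by blast
  have "H (y, t) \<in> topspace E" if "y \<in> topspace Y" "t \<in> {0..1}" for y t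
    using continuous_map_image_subset_topspace[OF H(1)] that by auto
  then show ?thesis
    unfolding fwp_homotopic_def using continuous_map_compose[OF H(1)] H(2-4) assms(2)
    by (intro exI[where x = "f \<circ> H"]) (auto simp: fwp_map_def)
qed

lemma fwp_homotopic_compose_right:
  assumes "fwp_homotopic B E pE sE Z pZ sZ g h" "fwp_map B Y pY sY E pE sE \<sigma>"
  shows "fwp_homotopic B Y pY sY Z pZ sZ (g \<circ> \<sigma>) (h \<circ> \<sigma>)"
proof -
  obtain H where H: "continuous_map (prod_topology E (top_of_set {0..1::real})) Z H"
    "\<forall>e\<in>topspace E. H (e, 0) = g e \<and> H (e, 1) = h e"
    "\<forall>e\<in>topspace E. \<forall>t\<in>{0..1}. pZ (H (e, t)) = pE e"
    "\<forall>b\<in>topspace B. \<forall>t\<in>{0..1}. H (sE b, t) = sZ b"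
    using assms(1) unfolding fwp_homotopic_def by blast
  have \<sigma>: "continuous_map Y E \<sigma>" "\<forall>y\<in>topspace Y. pE (\<sigma> y) = pY y"
    "\<forall>b\<in>topspace B. \<sigma> (sY b) = sE b"
    using assms(2) unfolding fwp_map_def by auto
  have "continuous_map (prod_topology Y (top_of_set {0..1::real}))
      (prod_topology E (top_of_set {0..1::real})) (\<lambda>(y, t). (\<sigma> y, t))"
    using \<sigma>(1) by (simp add: case_prod_unfold continuous_map_pairedI continuous_map_snd
        continuous_map_compose[OF continuous_map_fst, unfolded o_def])
  from continuous_map_compose[OF this H(1)]
  have "continuous_map (prod_topology Y (top_of_set {0..1::real})) Z (\<lambda>(y, t). H (\<sigma> y, t))"
    by (simp add: o_def case_prod_unfold)
  moreover have "\<sigma> y \<in> topspace E" if "y \<in> topspace Y" for y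
    using continuous_map_image_subset_topspace[OF \<sigma>(1)] that by auto
  ultimately show ?thesis
    unfolding fwp_homotopic_def using H(2-4) \<sigma>(2,3)
    by (intro exI[where x = "\<lambda>(y, t). H (\<sigma> y, t)"]) auto
qed

definition fwp_categorical :: "'b topology \<Rightarrow> 'x topology \<Rightarrow> ('x \<Rightarrow> 'b) \<Rightarrow> ('b \<Rightarrow> 'x)
    \<Rightarrow> 'x set \<Rightarrow> bool" where
  "fwp_categorical B X pX sX U \<longleftrightarrow>
     fwp_homotopic B (subtopology X U) pX sX X pX sX id (sX \<circ> pX)"

definition fwp_has_homotopy_section :: "'b topology \<Rightarrow> 'e topology \<Rightarrow> ('e \<Rightarrow> 'b)
    \<Rightarrow> ('b \<Rightarrow> 'e) \<Rightarrow> 'x topology \<Rightarrow> ('x \<Rightarrow> 'b) \<Rightarrow> ('b \<Rightarrow> 'x) \<Rightarrow> ('e \<Rightarrow> 'x) \<Rightarrow> 'x set \<Rightarrow> bool"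
  where
  "fwp_has_homotopy_section B E pE sE X pX sX f U \<longleftrightarrow>
     (\<exists>\<sigma>. fwp_map B (subtopology X U) pX sX E pE sE \<sigma> \<and>
          fwp_homotopic B (subtopology X U) pX sX X pX sX (f \<circ> \<sigma>) id)"

lemma fwp_categorical_imp_has_homotopy_section:
  assumes "fwp_space B E pE sE" "fwp_space B X pX sX" "fwp_map B E pE sE X pX sX f"
    and "sX ` topspace B \<subseteq> U" "fwp_categorical B X pX sX U"
  shows "fwp_has_homotopy_section B E pE sE X pX sX f U"
proof -
  let ?U = "subtopology X U"
  have cX: "continuous_map X B pX" "continuous_map B X sX" "\<forall>b\<in>topspace B. pX (sX b) = b"
    using assms(2) unfolding fwp_space_def by auto
  have cE: "continuous_map B E sE" "\<forall>b\<in>topspace B. pE (sE b) = b"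
    using assms(1) unfolding fwp_space_def by auto
  have pX: "pX x \<in> topspace B" if "x \<in> topspace X" for x
    using continuous_map_image_subset_topspace[OF cX(1)] that by blast
  have sX: "sX ` topspace B \<subseteq> topspace ?U"
    using continuous_map_image_subset_topspace[OF cX(2)] assms(4) by auto
  have "continuous_map ?U E (sE \<circ> pX)"
    using continuous_map_compose[OF continuous_map_from_subtopology[OF cX(1)] cE(1)] .
  then have "fwp_map B ?U pX sX E pE sE (sE \<circ> pX)"
    using cX(3) cE(2) pX unfolding fwp_map_def by auto
  moreover have "fwp_homotopic B ?U pX sX X pX sX (f \<circ> (sE \<circ> pX)) id"
  proof (rule fwp_homotopic_cong)
    show "fwp_homotopic B ?U pX sX X pX sX (sX \<circ> pX) id"
      using fwp_homotopic_sym[OF sX] assms(5) unfolding fwp_categorical_def by blast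
    show "(f \<circ> (sE \<circ> pX)) x = (sX \<circ> pX) x" if "x \<in> topspace ?U" for x
      using assms(3) pX that unfolding fwp_map_def by auto
  qed simp
  ultimately show ?thesis
    unfolding fwp_has_homotopy_section_def by blast
qed

lemma fwp_has_homotopy_section_imp_categorical:
  assumes "fwp_space B X pX sX" "fwp_map B E pE sE X pX sX f" "fwp_contractible B E pE sE"
    and "sX ` topspace B \<subseteq> U" "fwp_has_homotopy_section B E pE sE X pX sX f U"
  shows "fwp_categorical B X pX sX U"
proof -
  let ?U = "subtopology X U"
  obtain g h where g: "fwp_map B E pE sE B id id g" and h: "fwp_map B B id id E pE sE h"
    and hg: "fwp_homotopic B E pE sE E pE sE (h \<circ> g) id"
    using assms(3) unfolding fwp_contractible_def by blast
  obtain \<sigma> where \<sigma>: "fwp_map B ?U pX sX E pE sE \<sigma>"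
    and f\<sigma>: "fwp_homotopic B ?U pX sX X pX sX (f \<circ> \<sigma>) id"
    using assms(5) unfolding fwp_has_homotopy_section_def by blast
  have cX: "continuous_map X B pX" "continuous_map B X sX"
    using assms(1) unfolding fwp_space_def by auto
  have pX: "pX x \<in> topspace B" if "x \<in> topspace X" for x
    using continuous_map_image_subset_topspace[OF cX(1)] that by blast
  have sX: "sX ` topspace B \<subseteq> topspace ?U"
    using continuous_map_image_subset_topspace[OF cX(2)] assms(4) by auto
  have hg\<sigma>: "fwp_homotopic B ?U pX sX X pX sX (f \<circ> ((h \<circ> g) \<circ> \<sigma>)) (f \<circ> (id \<circ> \<sigma>))"
    by (rule fwp_homotopic_compose_left[OF fwp_homotopic_compose_right[OF hg \<sigma>] assms(2)])
  have retract: "(sX \<circ> pX) x = (f \<circ> ((h \<circ> g) \<circ> \<sigma>)) x" if "x \<in> topspace ?U" for x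
  proof -
    have "\<sigma> x \<in> topspace E"
      using \<sigma> that continuous_map_image_subset_topspace unfolding fwp_map_def by blast
    then have "h (g (\<sigma> x)) = sE (pX x)"
      using g h \<sigma> pX that unfolding fwp_map_def by auto
    then show ?thesis
      using assms(2) pX that unfolding fwp_map_def by auto
  qed
  have "fwp_homotopic B ?U pX sX X pX sX (sX \<circ> pX) (f \<circ> \<sigma>)"
    by (rule fwp_homotopic_cong[OF hg\<sigma>]) (use retract in auto)
  then have "fwp_homotopic B ?U pX sX X pX sX (sX \<circ> pX) id"
    using fwp_homotopic_trans[OF sX _ f\<sigma>] by blast
  then show ?thesis
    unfolding fwp_categorical_def by (rule fwp_homotopic_sym[OF sX])
qed

definition open_cover_number :: "'x topology \<Rightarrow> 'x set \<Rightarrow> ('x set \<Rightarrow> bool) \<Rightarrow> enat" where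
  "open_cover_number X S P = Inf {enat n | n. \<exists>U :: nat \<Rightarrow> 'x set.
     topspace X \<subseteq> (\<Union>i\<le>n. U i) \<and> (\<forall>i\<le>n. openin X (U i) \<and> S \<subseteq> U i \<and> P (U i))}"

lemma catBB_eq_open_cover_number:
  "catBB B X pX sX = open_cover_number X (sX ` topspace B) (fwp_categorical B X pX sX)"
  unfolding catBB_def open_cover_number_def fwp_categorical_def ..

lemma secatBB_eq_open_cover_number:
  "secatBB B E pE sE X pX sX f =
    open_cover_number X (sX ` topspace B) (fwp_has_homotopy_section B E pE sE X pX sX f)"
  unfolding secatBB_def open_cover_number_def fwp_has_homotopy_section_def ..

lemma open_cover_number_mono:
  assumes "\<And>U. openin X U \<Longrightarrow> S \<subseteq> U \<Longrightarrow> P U \<Longrightarrow> Q U"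
  shows "open_cover_number X S Q \<le> open_cover_number X S P"
  unfolding open_cover_number_def by (rule Inf_superset_mono) (use assms in blast)

theorem proposition3p6:
  fixes B :: "'b topology" and E :: "'e topology" and X :: "'x topology"
    and pE :: "'e \<Rightarrow> 'b" and sE :: "'b \<Rightarrow> 'e"
    and pX :: "'x \<Rightarrow> 'b" and sX :: "'b \<Rightarrow> 'x" and f :: "'e \<Rightarrow> 'x"
  assumes "fwp_space B E pE sE" and "fwp_space B X pX sX"
    and "fwp_map B E pE sE X pX sX f"
  shows "secatBB B E pE sE X pX sX f \<le> catBB B X pX sX \<and>
    (fwp_contractible B E pE sE \<longrightarrow> secatBB B E pE sE X pX sX f = catBB B X pX sX)"
proof (intro conjI impI)
  show le: "secatBB B E pE sE X pX sX f \<le> catBB B X pX sX"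
    unfolding secatBB_eq_open_cover_number catBB_eq_open_cover_number
    by (rule open_cover_number_mono) (rule fwp_categorical_imp_has_homotopy_section[OF assms])
  assume "fwp_contractible B E pE sE"
  then have "catBB B X pX sX \<le> secatBB B E pE sE X pX sX f"
    unfolding secatBB_eq_open_cover_number catBB_eq_open_cover_number
    by (intro open_cover_number_mono fwp_has_homotopy_section_imp_categorical[OF assms(2,3)])
  with le show "secatBB B E pE sE X pX sX f = catBB B X pX sX"
    by (rule antisym)
qed

end
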